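(* (Monogamy of entanglement and local contextuality.) Fix a noncontextuality inequality (data $N$, ${\cal E}_n$, $x_n$ as in the context) and a dimension $d_0$. Let A be a $d_0$-level system, B any finite-dimensional system, and $\rho$ any state of AB with $\rho_\mathrm{A}=\operatorname{tr}_\mathrm{B}\rho$. Define $$E(\rho)\equiv\inf_{\{P_m,|\Psi_m\rangle\}}\sum_mP_m\Big(C^{max}_{d_0}-C_{d_0}\big(\operatorname{tr}_\mathrm{B}|\Psi_m\rangle\langle\Psi_m|\big)\Big),$$ the infimum being over all ensembles of probabilities $P_m$ and pure states $|\Psi_m\rangle$ of AB with $\sum_mP_m|\Psi_m\rangle\langle\Psi_m|=\rho$. Then $$E(\rho)+C_{d_0}(\rho_\mathrm{A})\le C^{max}_{d_0}.$$
   Context: A noncontextuality inequality is specified by an integer $N$, a finite family of subsets ${\cal E}_n\subseteq\{1,\dots,N\}$ and real coefficients $x_n$ such that $\max_{a\in\{\pm1\}^N}\sum_nx_n\prod_{k\in{\cal E}_n}a_k=1$. For a dimension $d$, ${\cal A}_d$ is the set of tuples $(A_1,\dots,A_N)$ of Hermitian operators on $\mathbb C^d$ with $A_k^2=I$ such that $[A_k,A_l]=0$ whenever $k,l$ belong to a common ${\cal E}_n$. For a density matrix $\omega$ on $\mathbb C^d$, $C_d(\omega)=\sup_{(A_k)\in{\cal A}_d}\operatorname{tr}\big(\omega\sum_nx_n\prod_{k\in{\cal E}_n}A_k\big)$, and $C^{max}_d$ is the supremum of $C_d$ over all density matrices on $\mathbb C^d$. (The function $E$ is the convex-roof entanglement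 monotone built from the entropies $S^{lc}_d$; on systems with $\dim A=d_0$ it takes the form given in the claim.) *)

theory Defs
  imports "Jordan_Normal_Form.Matrix"
begin

definition mtrace :: "complex mat \<Rightarrow> complex" where
  "mtrace A = (\<Sum>i<dim_row A. A $$ (i, i))"

definition dagger :: "complex mat \<Rightarrow> complex mat" where
  "dagger A = mat (dim_col A) (dim_row A) (\<lambda>(i, j). cnj (A $$ (j, i)))"

definition hermitian_mat :: "nat \<Rightarrow> complex mat \<Rightarrow> bool" where
  "hermitian_mat d A \<longleftrightarrow> A \<in> carrier_mat d d \<and> dagger A = A"

definition psd_mat :: "nat \<Rightarrow> complex mat \<Rightarrow> bool" where
  "psd_mat d A \<longleftrightarrow> A \<in> carrier_mat d d \<and>
     (\<forall>v \<in> carrier_vec d.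
        let q = (\<Sum>i<d. cnj (v $ i) * (A *\<^sub>v v) $ i) in Im q = 0 \<and> Re q \<ge> 0)"

definition density_mat :: "nat \<Rightarrow> complex mat \<Rightarrow> bool" where
  "density_mat d \<omega> \<longleftrightarrow> hermitian_mat d \<omega> \<and> psd_mat d \<omega> \<and> mtrace \<omega> = 1"

text \<open>The inequality has M terms indexed by n < M; the observables are indexed
  k < N (0-based); term n has context E n \<subseteq> {..<N} and coefficient x n.\<close>

definition sign_vectors :: "nat \<Rightarrow> (nat \<Rightarrow> real) set" where
  "sign_vectors N = {a. \<forall>k<N. a k = 1 \<or> a k = -1}"

definition nc_value :: "nat \<Rightarrow> (nat \<Rightarrow> nat set) \<Rightarrow> (nat \<Rightarrow> real) \<Rightarrow> (nat \<Rightarrow> real) \<Rightarrow> real" where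
  "nc_value M E x a = (\<Sum>n<M. x n * (\<Prod>k\<in>E n. a k))"

definition nc_inequality :: "nat \<Rightarrow> nat \<Rightarrow> (nat \<Rightarrow> nat set) \<Rightarrow> (nat \<Rightarrow> real) \<Rightarrow> bool" where
  "nc_inequality N M E x \<longleftrightarrow>
     (\<forall>n<M. E n \<subseteq> {..<N}) \<and>
     (\<forall>a \<in> sign_vectors N. nc_value M E x a \<le> 1) \<and>
     (\<exists>a \<in> sign_vectors N. nc_value M E x a = 1)"

definition admissible :: "nat \<Rightarrow> nat \<Rightarrow> (nat \<Rightarrow> nat set) \<Rightarrow> nat \<Rightarrow> (nat \<Rightarrow> complex mat) \<Rightarrow> bool" where
  "admissible N M E d A \<longleftrightarrow>
     (\<forall>k<N. hermitian_mat d (A k) \<and> A k * A k = 1\<^sub>m d) \<and>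
     (\<forall>n<M. \<forall>k\<in>E n. \<forall>l\<in>E n. A k * A l = A l * A k)"

definition op_prod :: "nat \<Rightarrow> (nat \<Rightarrow> complex mat) \<Rightarrow> nat set \<Rightarrow> complex mat" where
  "op_prod d A S = foldr (\<lambda>k B. A k * B) (sorted_list_of_set S) (1\<^sub>m d)"

definition bell_operator :: "nat \<Rightarrow> (nat \<Rightarrow> nat set) \<Rightarrow> (nat \<Rightarrow> real) \<Rightarrow> nat \<Rightarrow> (nat \<Rightarrow> complex mat) \<Rightarrow> complex mat" where
  "bell_operator M E x d A = foldr (\<lambda>n B. complex_of_real (x n) \<cdot>\<^sub>m op_prod d A (E n) + B) [0..<M] (0\<^sub>m d d)"

text \<open>C_d(\<omega>): the trace is real for Hermitian operators, we take its real part.\<close>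
definition C_val :: "nat \<Rightarrow> nat \<Rightarrow> (nat \<Rightarrow> nat set) \<Rightarrow> (nat \<Rightarrow> real) \<Rightarrow> nat \<Rightarrow> complex mat \<Rightarrow> real" where
  "C_val N M E x d \<omega> =
     Sup {Re (mtrace (\<omega> * bell_operator M E x d A)) | A. admissible N M E d A}"

definition C_max :: "nat \<Rightarrow> nat \<Rightarrow> (nat \<Rightarrow> nat set) \<Rightarrow> (nat \<Rightarrow> real) \<Rightarrow> nat \<Rightarrow> real" where
  "C_max N M E x d = Sup {C_val N M E x d \<omega> | \<omega>. density_mat d \<omega>}"

text \<open>C^{d0} \<otimes> C^{dB} is identified with C^{d0*dB}, basis |a\<rangle>|b\<rangle> \<mapsto> index a*dB+b.\<close>
definition ptrace_B :: "nat \<Rightarrow> nat \<Rightarrow> complex mat \<Rightarrow> complex mat" where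
  "ptrace_B d0 dB \<rho> = mat d0 d0 (\<lambda>(i, j). \<Sum>b<dB. \<rho> $$ (i * dB + b, j * dB + b))"

definition proj_vec :: "complex vec \<Rightarrow> complex mat" where
  "proj_vec \<psi> = mat (dim_vec \<psi>) (dim_vec \<psi>) (\<lambda>(i, j). \<psi> $ i * cnj (\<psi> $ j))"

definition pure_state :: "nat \<Rightarrow> complex vec \<Rightarrow> bool" where
  "pure_state d \<psi> \<longleftrightarrow> \<psi> \<in> carrier_vec d \<and> (\<Sum>i<d. cmod (\<psi> $ i) ^ 2) = 1"

definition pure_ensemble :: "nat \<Rightarrow> complex mat \<Rightarrow> nat \<Rightarrow> (nat \<Rightarrow> real) \<Rightarrow> (nat \<Rightarrow> complex vec) \<Rightarrow> bool" where
  "pure_ensemble D \<rho> K P \<Psi> \<longleftrightarrow>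
     (\<forall>m<K. P m \<ge> 0 \<and> pure_state D (\<Psi> m)) \<and> (\<Sum>m<K. P m) = 1 \<and>
     foldr (\<lambda>m B. complex_of_real (P m) \<cdot>\<^sub>m proj_vec (\<Psi> m) + B) [0..<K] (0\<^sub>m D D) = \<rho>"

definition ent_E :: "nat \<Rightarrow> nat \<Rightarrow> (nat \<Rightarrow> nat set) \<Rightarrow> (nat \<Rightarrow> real) \<Rightarrow> nat \<Rightarrow> nat \<Rightarrow> complex mat \<Rightarrow> real" where
  "ent_E N M E x d0 dB \<rho> =
     Inf {(\<Sum>m<K. P m * (C_max N M E x d0 - C_val N M E x d0 (ptrace_B d0 dB (proj_vec (\<Psi> m)))))
          | K P \<Psi>. pure_ensemble (d0 * dB) \<rho> K P \<Psi>}"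

end

theory Submission
  imports Defs
begin

text \<open>For every admissible assignment the expectation \<open>\<omega> \<mapsto> tr(\<omega> B)\<close> of the Bell operator is
  linear, and so is the partial trace; hence \<open>C\<^sub>d\<^sub>0\<close> is convex and, for every pure-state ensemble
  \<open>{P\<^sub>m, \<Psi>\<^sub>m}\<close> of \<open>\<rho>\<close>, \<open>C(\<rho>\<^sub>A) \<le> \<Sum>\<^sub>m P\<^sub>m C(tr\<^sub>B \<Psi>\<^sub>m)\<close>. Rearranged, the objective of the
  infimum defining \<open>E(\<rho>)\<close> is at most \<open>C\<^sup>m\<^sup>a\<^sup>x - C(\<rho>\<^sub>A)\<close> on every ensemble.

  What remains is to make the infimum and the suprema meaningful. Ensembles exist: a positive
  semidefinite matrix is a sum of rank-one terms \<open>u u\<^sup>*\<close>, found column by column as in a Cholesky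
  factorization, where subtracting the rank-one part of a pivot column preserves positivity by the
  Cauchy--Schwarz inequality. And the values \<open>tr(\<omega> B)\<close> are bounded, because a product of
  Hermitian involutions is unitary, so its entries have modulus at most 1.\<close>

section \<open>Positive semidefinite kernels and Gram decompositions\<close>

definition quad_form :: "nat \<Rightarrow> (nat \<Rightarrow> nat \<Rightarrow> complex) \<Rightarrow> (nat \<Rightarrow> complex) \<Rightarrow> complex" where
  "quad_form D R v = (\<Sum>i<D. cnj (v i) * (\<Sum>j<D. R i j * v j))"

definition hermitian_kernel :: "nat \<Rightarrow> (nat \<Rightarrow> nat \<Rightarrow> complex) \<Rightarrow> bool" where
  "hermitian_kernel D R \<longleftrightarrow> (\<forall>i<D. \<forall>j<D. R j i = cnj (R i j))"

definition psd_kernel :: "nat \<Rightarrow> (nat \<Rightarrow> nat \<Rightarrow> complex) \<Rightarrow> bool" where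
  "psd_kernel D R \<longleftrightarrow> (\<forall>v. Im (quad_form D R v) = 0 \<and> 0 \<le> Re (quad_form D R v))"

lemma psd_kernelD:
  assumes "psd_kernel D R"
  shows "Im (quad_form D R v) = 0" "0 \<le> Re (quad_form D R v)"
  using assms unfolding psd_kernel_def by auto

lemma hermitian_kernelD: "hermitian_kernel D R \<Longrightarrow> i < D \<Longrightarrow> j < D \<Longrightarrow> cnj (R i j) = R j i"
  unfolding hermitian_kernel_def by (metis complex_cnj_cnj)

lemma of_real_cmod_power2: "(complex_of_real (cmod z))\<^sup>2 = z * cnj z"
  by (metis complex_norm_square of_real_power)

lemma if_zero_mult: "(if P then a else 0) * c = (if P then a * c else (0::'a::mult_zero))"
  and mult_if_zero: "c * (if P then a else 0) = (if P then c * a else (0::'a::mult_zero))"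
  by simp_all

lemmas delta_simps = if_zero_mult mult_if_zero if_distrib[of cnj]

lemma quad_form_point: "k < D \<Longrightarrow> quad_form D R (\<lambda>i. if i = k then 1 else 0) = R k k"
  unfolding quad_form_def by (simp add: delta_simps cong: if_cong)

lemma quad_form_add_point:
  assumes herm: "hermitian_kernel D R" and k: "k < D"
  shows "quad_form D R (\<lambda>i. v i + (if i = k then s else 0)) =
    quad_form D R v + cnj s * (\<Sum>j<D. R k j * v j) + s * cnj (\<Sum>j<D. R k j * v j)
      + cnj s * s * R k k"
proof -
  have row: "(\<Sum>j<D. R i j * (v j + (if j = k then s else 0))) = (\<Sum>j<D. R i j * v j) + R i k * s"
    for i using k by (simp add: distrib_left sum.distrib delta_simps cong: if_cong)
  have "(\<Sum>i<D. cnj (v i) * (R i k * s)) = s * (\<Sum>i<D. cnj (R k i * v i))"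
    unfolding sum_distrib_left
  proof (intro sum.cong refl)
    fix i assume "i \<in> {..<D}"
    then have "R i k = cnj (R k i)" using hermitian_kernelD[OF herm k] by simp
    then show "cnj (v i) * (R i k * s) = s * cnj (R k i * v i)" by simp
  qed
  then have cross: "(\<Sum>i<D. cnj (v i) * (R i k * s)) = s * cnj (\<Sum>j<D. R k j * v j)"
    by (simp add: cnj_sum)
  show ?thesis
    unfolding quad_form_def row using k
    by (simp add: distrib_left distrib_right sum.distrib delta_simps cross add_ac cong: if_cong)
qed

lemma psd_kernel_diag:
  assumes "psd_kernel D R" "k < D"
  shows "R k k = complex_of_real (Re (R k k))" "0 \<le> Re (R k k)"
  using psd_kernelD[OF assms(1), of "\<lambda>i. if i = k then 1 else 0"] quad_form_point[OF assms(2)]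
  by (auto simp: complex_eq_iff)


lemma psd_kernel_cauchy_schwarz:
  assumes herm: "hermitian_kernel D R" and psd: "psd_kernel D R" and k: "k < D"
  shows "(cmod (\<Sum>j<D. R k j * v j))\<^sup>2 \<le> Re (R k k) * Re (quad_form D R v)"
proof -
  define \<alpha> where "\<alpha> = (\<Sum>j<D. R k j * v j)"
  define a where "a = (cmod \<alpha>)\<^sup>2"
  define r where "r = Re (R k k)"
  define Q where "Q = Re (quad_form D R v)"
  have r: "R k k = complex_of_real r" "0 \<le> r" unfolding r_def using psd_kernel_diag[OF psd k] by auto
  have "\<alpha> * cnj \<alpha> = complex_of_real a"
    unfolding a_def by (rule complex_norm_square[symmetric])
  then have \<alpha>\<alpha>: "cnj \<alpha> * \<alpha> = complex_of_real a" "\<alpha> * cnj \<alpha> = complex_of_real a"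
    by (simp_all add: mult.commute)
  have parabola: "0 \<le> Q - 2 * t * a + t\<^sup>2 * a * r" for t :: real
  proof -
    define s where "s = - (complex_of_real t * \<alpha>)"
    have "cnj s * \<alpha> = - complex_of_real (t * a)" "s * cnj \<alpha> = - complex_of_real (t * a)"
      "cnj s * s * R k k = complex_of_real (t\<^sup>2 * a * r)"
      unfolding s_def r(1) using \<alpha>\<alpha> by (simp_all add: power2_eq_square mult_ac)
    then have "Re (quad_form D R (\<lambda>i. v i + (if i = k then s else 0))) = Q - 2 * t * a + t\<^sup>2 * a * r"
      unfolding quad_form_add_point[OF herm k] \<alpha>_def[symmetric] Q_def by simp
    then show ?thesis using psd_kernelD(2)[OF psd] by metis
  qed
  have "a \<le> r * Q"
  proof (cases "r = 0")
    case True
    have "\<not> 0 < a"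
    proof
      assume "0 < a"
      then show False using parabola[of "(Q + 1) / (2 * a)"] True by (simp add: field_simps)
    qed
    then show ?thesis using True by (simp add: a_def)
  next
    case False
    then show ?thesis using parabola[of "1 / r"] r(2) by (simp add: power2_eq_square field_simps)
  qed
  then show ?thesis unfolding a_def \<alpha>_def r_def Q_def .
qed

lemma quad_form_rank_one_update:
  "quad_form D (\<lambda>a b. R a b - w a * cnj (w b)) v =
    quad_form D R v - complex_of_real ((cmod (\<Sum>j<D. cnj (w j) * v j))\<^sup>2)"
proof -
  define \<beta> where "\<beta> = (\<Sum>j<D. cnj (w j) * v j)"
  have row: "(\<Sum>j<D. (R i j - w i * cnj (w j)) * v j) = (\<Sum>j<D. R i j * v j) - w i * \<beta>" for i
    unfolding \<beta>_def by (simp add: left_diff_distrib sum_subtractf sum_distrib_left mult.assoc)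
  have "(\<Sum>i<D. cnj (v i) * (w i * \<beta>)) = (\<Sum>i<D. cnj (v i) * w i) * \<beta>"
    by (simp add: sum_distrib_right mult.assoc)
  also have "(\<Sum>i<D. cnj (v i) * w i) = cnj \<beta>"
    unfolding \<beta>_def by (simp add: cnj_sum mult.commute)
  also have "cnj \<beta> * \<beta> = complex_of_real ((cmod \<beta>)\<^sup>2)"
    by (subst mult.commute) (rule complex_norm_square[symmetric])
  finally show ?thesis
    unfolding quad_form_def row \<beta>_def[symmetric]
    by (simp add: right_diff_distrib sum_subtractf)
qed

lemma hermitian_kernel_rank_one_update:
  assumes "hermitian_kernel D R"
  shows "hermitian_kernel D (\<lambda>a b. R a b - w a * cnj (w b))"
  unfolding hermitian_kernel_def
proof (intro allI impI)
  fix i j assume "i < D" "j < D"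
  then have "R j i = cnj (R i j)" using assms unfolding hermitian_kernel_def by blast
  then show "R j i - w j * cnj (w i) = cnj (R i j - w i * cnj (w j))" by (simp add: mult.commute)
qed

text \<open>When \<open>R k k = 0\<close> the division returns 0; this is harmless, since positivity then
  forces the whole row \<open>k\<close> to vanish.\<close>
definition pivot_column :: "(nat \<Rightarrow> nat \<Rightarrow> complex) \<Rightarrow> nat \<Rightarrow> nat \<Rightarrow> complex" where
  "pivot_column R k a = R a k / complex_of_real (sqrt (Re (R k k)))"

lemma psd_kernel_row_vanishes:
  assumes herm: "hermitian_kernel D R" and psd: "psd_kernel D R" and k: "k < D" and b: "b < D"
    and zero: "Re (R k k) = 0"
  shows "R k b = 0"
proof -
  have "(cmod (\<Sum>j<D. R k j * (if j = b then 1 else 0)))\<^sup>2 \<le> 0"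
    using psd_kernel_cauchy_schwarz[OF herm psd k] zero by simp
  then show ?thesis using b by (simp add: delta_simps cong: if_cong)
qed

lemma pivot_column_outer_row:
  assumes herm: "hermitian_kernel D R" and psd: "psd_kernel D R" and k: "k < D" and b: "b < D"
  shows "pivot_column R k k * cnj (pivot_column R k b) = R k b"
proof (cases "Re (R k k) = 0")
  case True
  then show ?thesis using psd_kernel_row_vanishes[OF herm psd k b] by (simp add: pivot_column_def)
next
  case False
  define r where "r = Re (R k k)"
  have r: "R k k = complex_of_real r" "0 < r"
    using psd_kernel_diag[OF psd k] False unfolding r_def by auto
  have "cnj (R b k) = R k b" by (rule hermitian_kernelD[OF herm b k])
  moreover have "complex_of_real r / complex_of_real (sqrt r) = complex_of_real (sqrt r)"
    using r(2) by (simp add: field_simps flip: of_real_mult)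
  ultimately show ?thesis
    using r(2) unfolding pivot_column_def r(1) r_def[symmetric] by simp
qed

lemma psd_kernel_deflate:
  assumes herm: "hermitian_kernel D R" and psd: "psd_kernel D R" and k: "k < D"
  defines "w \<equiv> pivot_column R k"
  shows "psd_kernel D (\<lambda>a b. R a b - w a * cnj (w b))"
  unfolding psd_kernel_def quad_form_rank_one_update
proof
  fix v
  define \<alpha> where "\<alpha> = (\<Sum>j<D. R k j * v j)"
  define r where "r = Re (R k k)"
  have "(\<Sum>j<D. cnj (w j) * v j) = \<alpha> / complex_of_real (sqrt r)"
    unfolding \<alpha>_def sum_divide_distrib
  proof (intro sum.cong refl)
    fix j assume "j \<in> {..<D}"
    then have "cnj (R j k) = R k j" using hermitian_kernelD[OF herm _ k] by simp
    then show "cnj (w j) * v j = R k j * v j / complex_of_real (sqrt r)"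
      unfolding w_def pivot_column_def r_def by simp
  qed
  then have "(cmod (\<Sum>j<D. cnj (w j) * v j))\<^sup>2 = (cmod \<alpha>)\<^sup>2 / r"
    using psd_kernel_diag(2)[OF psd k] by (simp add: norm_divide power_divide r_def)
  also have "\<dots> \<le> Re (quad_form D R v)"
    using psd_kernel_cauchy_schwarz[OF herm psd k, of v] psd_kernelD(2)[OF psd, of v]
      psd_kernel_diag(2)[OF psd k]
    by (cases "r = 0") (auto simp: \<alpha>_def r_def field_simps)
  finally show "Im (quad_form D R v - complex_of_real ((cmod (\<Sum>j<D. cnj (w j) * v j))\<^sup>2)) = 0 \<and>
      0 \<le> Re (quad_form D R v - complex_of_real ((cmod (\<Sum>j<D. cnj (w j) * v j))\<^sup>2))"
    using psd_kernelD(1)[OF psd, of v] by simp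
qed

lemma psd_kernel_deflate_vanishes:
  assumes herm: "hermitian_kernel D R" and psd: "psd_kernel D R" and k: "k < D"
    and zero: "\<forall>a<D. \<forall>b<D. a < k \<or> b < k \<longrightarrow> R a b = 0"
    and ab: "a < D" "b < D" "a < Suc k \<or> b < Suc k"
  defines "w \<equiv> pivot_column R k"
  shows "R a b - w a * cnj (w b) = 0"
proof -
  have row: "R a' b' - w a' * cnj (w b') = 0" if "a' < D" "b' < D" "a' \<le> k" for a' b'
  proof (cases "a' = k")
    case True
    then show ?thesis using pivot_column_outer_row[OF herm psd k \<open>b' < D\<close>] by (simp add: w_def)
  next
    case False
    then show ?thesis using zero that k by (simp add: w_def pivot_column_def)
  qed
  show ?thesis
  proof (cases "a \<le> k")
    case True
    then show ?thesis using row ab by blast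
  next
    case False
    then have "R b a - w b * cnj (w a) = 0" using row ab by simp
    then show ?thesis
      using hermitian_kernelD[OF hermitian_kernel_rank_one_update[OF herm, of w] ab(2,1)]
      by (metis complex_cnj_zero_iff)
  qed
qed

lemma psd_kernel_partial_gram:
  assumes herm: "hermitian_kernel D R" and psd: "psd_kernel D R"
  shows "k \<le> D \<Longrightarrow> \<exists>u R'. hermitian_kernel D R' \<and> psd_kernel D R'
    \<and> (\<forall>a<D. \<forall>b<D. a < k \<or> b < k \<longrightarrow> R' a b = 0)
    \<and> (\<forall>a<D. \<forall>b<D. R a b = (\<Sum>m<k. u m a * cnj (u m b)) + R' a b)"
proof (induction k)
  case 0
  show ?case using herm psd by (intro exI[of _ "\<lambda>_ _. 0"] exI[of _ R]) auto
next
  case (Suc k)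
  then obtain u R' where R': "hermitian_kernel D R'" "psd_kernel D R'"
    "\<forall>a<D. \<forall>b<D. a < k \<or> b < k \<longrightarrow> R' a b = 0"
    and decomp: "\<forall>a<D. \<forall>b<D. R a b = (\<Sum>m<k. u m a * cnj (u m b)) + R' a b"
    by auto
  have k: "k < D" using Suc.prems by simp
  define w where "w = pivot_column R' k"
  show ?case
  proof (intro exI conjI)
    show "hermitian_kernel D (\<lambda>a b. R' a b - w a * cnj (w b))"
      by (rule hermitian_kernel_rank_one_update[OF R'(1)])
    show "psd_kernel D (\<lambda>a b. R' a b - w a * cnj (w b))"
      unfolding w_def by (rule psd_kernel_deflate[OF R'(1,2) k])
    show "\<forall>a<D. \<forall>b<D. a < Suc k \<or> b < Suc k \<longrightarrow> R' a b - w a * cnj (w b) = 0"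
      unfolding w_def using psd_kernel_deflate_vanishes[OF R'(1,2) k R'(3)] by blast
    show "\<forall>a<D. \<forall>b<D. R a b = (\<Sum>m<Suc k. (u(k := w)) m a * cnj ((u(k := w)) m b))
        + (R' a b - w a * cnj (w b))"
      using decomp by simp
  qed
qed

lemma psd_kernel_gram:
  assumes "hermitian_kernel D R" "psd_kernel D R"
  obtains u where "\<And>a b. a < D \<Longrightarrow> b < D \<Longrightarrow> R a b = (\<Sum>m<D. u m a * cnj (u m b))"
  using psd_kernel_partial_gram[OF assms order_refl] by force

section \<open>Pure-state ensembles\<close>

lemma foldr_add_mat_carrier:
  assumes "\<forall>m\<in>set ms. f m \<in> carrier_mat n n"
  shows "foldr (\<lambda>m B. f m + B) ms (0\<^sub>m n n) \<in> carrier_mat n n"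
  using assms by (induction ms) auto

lemma foldr_add_mat_index:
  assumes "\<forall>m\<in>set ms. f m \<in> carrier_mat n n" "i < n" "j < n"
  shows "foldr (\<lambda>m B. f m + B) ms (0\<^sub>m n n) $$ (i, j) = (\<Sum>m\<leftarrow>ms. f m $$ (i, j))"
  using assms
proof (induction ms)
  case (Cons m ms)
  then have "foldr (\<lambda>m B. f m + B) ms (0\<^sub>m n n) \<in> carrier_mat n n"
    by (intro foldr_add_mat_carrier) auto
  with Cons show ?case by simp
qed simp

lemma foldr_add_upt_carrier:
  assumes "\<forall>m<K. f m \<in> carrier_mat n n"
  shows "foldr (\<lambda>m B. f m + B) [0..<K] (0\<^sub>m n n) \<in> carrier_mat n n"
  using assms by (intro foldr_add_mat_carrier) auto

lemma foldr_add_upt_index: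
  assumes "\<forall>m<K. f m \<in> carrier_mat n n" "i < n" "j < n"
  shows "foldr (\<lambda>m B. f m + B) [0..<K] (0\<^sub>m n n) $$ (i, j) = (\<Sum>m<K. f m $$ (i, j))"
  using foldr_add_mat_index[of "[0..<K]" f n i j] assms
  by (simp add: interv_sum_list_conv_sum_set_nat atLeast0LessThan)

lemma density_mat_hermitian_kernel:
  assumes "density_mat D \<rho>"
  shows "hermitian_kernel D (\<lambda>a b. \<rho> $$ (a, b))"
  unfolding hermitian_kernel_def
proof (intro allI impI)
  fix i j assume "i < D" "j < D"
  moreover have "\<rho> \<in> carrier_mat D D" "dagger \<rho> = \<rho>"
    using assms unfolding density_mat_def hermitian_mat_def by auto
  ultimately show "\<rho> $$ (j, i) = cnj (\<rho> $$ (i, j))"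
    unfolding dagger_def by (metis case_prod_conv carrier_matD index_mat(1))
qed

lemma density_mat_psd_kernel:
  assumes "density_mat D \<rho>"
  shows "psd_kernel D (\<lambda>a b. \<rho> $$ (a, b))"
  unfolding psd_kernel_def
proof
  fix v
  have \<rho>: "\<rho> \<in> carrier_mat D D" "psd_mat D \<rho>"
    using assms unfolding density_mat_def hermitian_mat_def by auto
  have "(\<Sum>i<D. cnj (vec D v $ i) * (\<rho> *\<^sub>v vec D v) $ i) = quad_form D (\<lambda>a b. \<rho> $$ (a, b)) v"
    unfolding quad_form_def using \<rho>(1)
    by (intro sum.cong refl) (simp add: scalar_prod_def atLeast0LessThan)
  then show "Im (quad_form D (\<lambda>a b. \<rho> $$ (a, b)) v) = 0 \<and> 0 \<le> Re (quad_form D (\<lambda>a b. \<rho> $$ (a, b)) v)"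
    using \<rho>(2) unfolding psd_mat_def Let_def by (metis vec_carrier)
qed

lemma density_mat_dim_pos: "density_mat D \<rho> \<Longrightarrow> 0 < D"
  unfolding density_mat_def hermitian_mat_def mtrace_def by (cases D) auto

definition sum_norm_sq :: "nat \<Rightarrow> (nat \<Rightarrow> complex) \<Rightarrow> real" where
  "sum_norm_sq D u = (\<Sum>a<D. (cmod (u a))\<^sup>2)"

text \<open>The zero vector is sent to an arbitrary unit vector; it only ever carries weight 0.\<close>
definition normalized_vec :: "nat \<Rightarrow> (nat \<Rightarrow> complex) \<Rightarrow> complex vec" where
  "normalized_vec D u = (if sum_norm_sq D u = 0 then unit_vec D 0
     else vec D (\<lambda>a. u a / complex_of_real (sqrt (sum_norm_sq D u))))"

lemma sum_norm_sq_nonneg: "0 \<le> sum_norm_sq D u"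
  unfolding sum_norm_sq_def by (simp add: sum_nonneg)

lemma sum_norm_sq_eq_0: "sum_norm_sq D u = 0 \<Longrightarrow> a < D \<Longrightarrow> u a = 0"
  unfolding sum_norm_sq_def by (subst (asm) sum_nonneg_eq_0_iff) auto

lemma pure_state_normalized_vec:
  assumes "0 < D"
  shows "pure_state D (normalized_vec D u)"
proof (cases "sum_norm_sq D u = 0")
  case True
  have "(\<Sum>i<D. (cmod (unit_vec D 0 $ i))\<^sup>2) = (\<Sum>i<D. if i = 0 then 1 else 0)"
    by (intro sum.cong refl) simp
  then show ?thesis using True assms unfolding pure_state_def normalized_vec_def by simp
next
  case False
  then have pos: "0 < sum_norm_sq D u" using sum_norm_sq_nonneg[of D u] by simp
  have "(\<Sum>i<D. (cmod (u i / complex_of_real (sqrt (sum_norm_sq D u))))\<^sup>2)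
      = (\<Sum>i<D. (cmod (u i))\<^sup>2) / sum_norm_sq D u"
    using pos by (simp add: norm_divide power_divide sum_divide_distrib)
  then show ?thesis using False pos unfolding pure_state_def normalized_vec_def
    by (simp add: sum_norm_sq_def)
qed

lemma sum_norm_sq_scaled_proj:
  assumes "a < D" "b < D"
  shows "complex_of_real (sum_norm_sq D u) * (normalized_vec D u $ a * cnj (normalized_vec D u $ b))
    = u a * cnj (u b)"
proof (cases "sum_norm_sq D u = 0")
  case True
  then show ?thesis using sum_norm_sq_eq_0 assms by simp
next
  case False
  then have pos: "0 < sum_norm_sq D u" using sum_norm_sq_nonneg[of D u] by simp
  define s where "s = complex_of_real (sqrt (sum_norm_sq D u))"
  have "s * s = complex_of_real (sum_norm_sq D u)" "s \<noteq> 0" "cnj s = s"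
    unfolding s_def using pos by (simp_all flip: of_real_mult)
  then show ?thesis
    using False assms unfolding normalized_vec_def s_def[symmetric] by (simp add: field_simps)
qed

lemma pure_ensemble_of_gram:
  assumes \<rho>: "\<rho> \<in> carrier_mat D D" "mtrace \<rho> = 1" and D: "0 < D"
    and gram: "\<And>a b. a < D \<Longrightarrow> b < D \<Longrightarrow> \<rho> $$ (a, b) = (\<Sum>m<K. u m a * cnj (u m b))"
  shows "pure_ensemble D \<rho> K (\<lambda>m. sum_norm_sq D (u m)) (\<lambda>m. normalized_vec D (u m))"
proof -
  let ?P = "\<lambda>m. sum_norm_sq D (u m)" and ?\<Psi> = "\<lambda>m. normalized_vec D (u m)"
  have pure: "pure_state D (?\<Psi> m)" for m by (rule pure_state_normalized_vec[OF D])
  have "complex_of_real (\<Sum>m<K. ?P m) = (\<Sum>i<D. \<Sum>m<K. u m i * cnj (u m i))"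
    unfolding sum_norm_sq_def of_real_sum
    by (subst sum.swap) (simp add: of_real_cmod_power2)
  also have "\<dots> = mtrace \<rho>"
    unfolding mtrace_def using \<rho>(1) gram by simp
  finally have sum_P: "(\<Sum>m<K. ?P m) = 1"
    using \<rho>(2) by (metis of_real_eq_1_iff)
  have terms: "\<forall>m<K. complex_of_real (?P m) \<cdot>\<^sub>m proj_vec (?\<Psi> m) \<in> carrier_mat D D"
    using pure unfolding pure_state_def proj_vec_def by auto
  have "foldr (\<lambda>m B. complex_of_real (?P m) \<cdot>\<^sub>m proj_vec (?\<Psi> m) + B) [0..<K] (0\<^sub>m D D) = \<rho>"
  proof (rule eq_matI)
    fix i j assume "i < dim_row \<rho>" "j < dim_col \<rho>"
    then have ij: "i < D" "j < D" using \<rho>(1) by auto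
    have "dim_vec (?\<Psi> m) = D" for m using pure[of m] unfolding pure_state_def by simp
    then show "foldr (\<lambda>m B. complex_of_real (?P m) \<cdot>\<^sub>m proj_vec (?\<Psi> m) + B) [0..<K] (0\<^sub>m D D) $$ (i, j)
        = \<rho> $$ (i, j)"
      unfolding foldr_add_upt_index[OF terms ij] gram[OF ij]
      using ij by (intro sum.cong refl) (simp add: proj_vec_def sum_norm_sq_scaled_proj)
  qed (use foldr_add_upt_carrier[OF terms] \<rho>(1) in auto)
  then show ?thesis
    unfolding pure_ensemble_def using pure sum_P sum_norm_sq_nonneg by blast
qed

lemma density_mat_pure_ensemble:
  assumes "density_mat D \<rho>"
  obtains K P \<Psi> where "pure_ensemble D \<rho> K P \<Psi>"
proof -
  obtain u where "\<And>a b. a < D \<Longrightarrow> b < D \<Longrightarrow> \<rho> $$ (a, b) = (\<Sum>m<D. u m a * cnj (u m b))"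
    using psd_kernel_gram[OF density_mat_hermitian_kernel[OF assms] density_mat_psd_kernel[OF assms]]
    by blast
  moreover have "\<rho> \<in> carrier_mat D D" "mtrace \<rho> = 1"
    using assms unfolding density_mat_def hermitian_mat_def by auto
  ultimately show ?thesis
    using pure_ensemble_of_gram density_mat_dim_pos[OF assms] that by blast
qed

section \<open>Boundedness of Bell operator expectations\<close>

lemma dagger_carrier: "A \<in> carrier_mat n m \<Longrightarrow> dagger A \<in> carrier_mat m n"
  unfolding dagger_def by simp

lemma dagger_index: "A \<in> carrier_mat n m \<Longrightarrow> i < m \<Longrightarrow> j < n \<Longrightarrow> dagger A $$ (i, j) = cnj (A $$ (j, i))"
  unfolding dagger_def by simp

lemma dagger_one: "dagger (1\<^sub>m n) = 1\<^sub>m n"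
  by (rule eq_matI) (auto simp: dagger_def)

lemma dagger_mult:
  assumes A: "A \<in> carrier_mat n n" and B: "B \<in> carrier_mat n n"
  shows "dagger (A * B) = dagger B * dagger A"
proof (rule eq_matI)
  fix i j assume "i < dim_row (dagger B * dagger A)" "j < dim_col (dagger B * dagger A)"
  then have ij: "i < n" "j < n" using A B dagger_carrier by auto
  have "dagger (A * B) $$ (i, j) = cnj ((A * B) $$ (j, i))"
    using A B ij by (intro dagger_index) auto
  also have "\<dots> = cnj (\<Sum>k<n. A $$ (j, k) * B $$ (k, i))"
    using A B ij by (simp add: scalar_prod_def atLeast0LessThan)
  also have "\<dots> = (\<Sum>k<n. dagger B $$ (i, k) * dagger A $$ (k, j))"
    unfolding cnj_sum using A B ij by (intro sum.cong) (auto simp: dagger_index mult.commute)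
  also have "\<dots> = (dagger B * dagger A) $$ (i, j)"
    using A B ij dagger_carrier[OF A] dagger_carrier[OF B] by (simp add: scalar_prod_def atLeast0LessThan)
  finally show "dagger (A * B) $$ (i, j) = (dagger B * dagger A) $$ (i, j)" .
qed (use A B in \<open>auto simp: dagger_def\<close>)

definition unitary_mat :: "nat \<Rightarrow> complex mat \<Rightarrow> bool" where
  "unitary_mat n U \<longleftrightarrow> U \<in> carrier_mat n n \<and> dagger U * U = 1\<^sub>m n"

lemma unitary_mat_one: "unitary_mat n (1\<^sub>m n)"
  unfolding unitary_mat_def dagger_one by simp

lemma unitary_mat_mult:
  assumes "unitary_mat n A" "unitary_mat n B"
  shows "unitary_mat n (A * B)"
proof -
  have A: "A \<in> carrier_mat n n" "dagger A * A = 1\<^sub>m n"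
    and B: "B \<in> carrier_mat n n" "dagger B * B = 1\<^sub>m n"
    using assms unfolding unitary_mat_def by auto
  have dA: "dagger A \<in> carrier_mat n n" and dB: "dagger B \<in> carrier_mat n n"
    using A B dagger_carrier by auto
  have "dagger (A * B) * (A * B) = dagger B * (dagger A * (A * B))"
    using A B dA dB by (simp add: dagger_mult assoc_mult_mat[of _ n n _ n _ n])
  also have "dagger A * (A * B) = B"
    using A B dA by (simp flip: assoc_mult_mat[OF dA A(1) B(1)])
  finally have "dagger (A * B) * (A * B) = 1\<^sub>m n" using B by simp
  then show ?thesis using A B unfolding unitary_mat_def by simp
qed

lemma unitary_mat_entry_norm_le_1:
  assumes "unitary_mat n U" "i < n" "j < n"
  shows "cmod (U $$ (i, j)) \<le> 1"
proof -
  have U: "U \<in> carrier_mat n n" "dagger U * U = 1\<^sub>m n" using assms unfolding unitary_mat_def by auto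
  have "complex_of_real (\<Sum>k<n. (cmod (U $$ (k, j)))\<^sup>2) = (dagger U * U) $$ (j, j)"
    using U(1) assms dagger_carrier[OF U(1)]
    by (simp add: scalar_prod_def atLeast0LessThan dagger_index of_real_cmod_power2 mult.commute)
  also have "\<dots> = 1" using U assms by simp
  finally have "(\<Sum>k<n. (cmod (U $$ (k, j)))\<^sup>2) = 1" by (metis of_real_eq_1_iff)
  moreover have "(cmod (U $$ (i, j)))\<^sup>2 \<le> (\<Sum>k<n. (cmod (U $$ (k, j)))\<^sup>2)"
    using assms(2) by (intro member_le_sum) auto
  ultimately show ?thesis by (simp add: power_le_one_iff abs_le_square_iff)
qed

lemma unitary_mat_foldr_mult:
  assumes "\<forall>k\<in>set ks. unitary_mat d (A k)"
  shows "unitary_mat d (foldr (\<lambda>k B. A k * B) ks (1\<^sub>m d))"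
  using assms by (induction ks) (auto intro: unitary_mat_mult unitary_mat_one)

lemma op_prod_unitary:
  assumes adm: "admissible N M E d A" and sub: "E n \<subseteq> {..<N}"
  shows "unitary_mat d (op_prod d A (E n))"
proof -
  have "unitary_mat d (A k)" if "k \<in> E n" for k
    using adm sub that unfolding admissible_def unitary_mat_def hermitian_mat_def by auto
  moreover have "finite (E n)" using sub finite_subset by blast
  ultimately show ?thesis
    unfolding op_prod_def by (intro unitary_mat_foldr_mult) simp
qed

lemma bell_operator_terms_carrier:
  assumes "admissible N M E d A" and "\<forall>n<M. E n \<subseteq> {..<N}"
  shows "\<forall>n<M. complex_of_real (x n) \<cdot>\<^sub>m op_prod d A (E n) \<in> carrier_mat d d"
  using op_prod_unitary[OF assms(1)] assms(2) unfolding unitary_mat_def by auto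

lemma bell_operator_carrier:
  assumes "admissible N M E d A" and "\<forall>n<M. E n \<subseteq> {..<N}"
  shows "bell_operator M E x d A \<in> carrier_mat d d"
  unfolding bell_operator_def by (rule foldr_add_upt_carrier[OF bell_operator_terms_carrier[OF assms]])

lemma bell_operator_entry_norm_le:
  assumes adm: "admissible N M E d A" and contexts: "\<forall>n<M. E n \<subseteq> {..<N}"
    and ij: "i < d" "j < d"
  shows "cmod (bell_operator M E x d A $$ (i, j)) \<le> (\<Sum>n<M. \<bar>x n\<bar>)"
proof -
  have "bell_operator M E x d A $$ (i, j) = (\<Sum>n<M. complex_of_real (x n) * op_prod d A (E n) $$ (i, j))"
    unfolding bell_operator_def foldr_add_upt_index[OF bell_operator_terms_carrier[OF adm contexts] ij]
  proof (intro sum.cong refl)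
    fix n assume "n \<in> {..<M}"
    then have "op_prod d A (E n) \<in> carrier_mat d d"
      using op_prod_unitary[OF adm] contexts unfolding unitary_mat_def by blast
    then show "(complex_of_real (x n) \<cdot>\<^sub>m op_prod d A (E n)) $$ (i, j)
        = complex_of_real (x n) * op_prod d A (E n) $$ (i, j)"
      using ij by simp
  qed
  then have "cmod (bell_operator M E x d A $$ (i, j))
      \<le> (\<Sum>n<M. cmod (complex_of_real (x n) * op_prod d A (E n) $$ (i, j)))"
    by (simp add: norm_sum)
  also have "\<dots> \<le> (\<Sum>n<M. \<bar>x n\<bar>)"
    using unitary_mat_entry_norm_le_1[OF op_prod_unitary[OF adm] ij] contexts
    by (intro sum_mono) (simp add: norm_mult mult_left_le)
  finally show ?thesis .
qed

lemma mtrace_mult: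
  assumes "\<omega> \<in> carrier_mat d d" "B \<in> carrier_mat d d"
  shows "mtrace (\<omega> * B) = (\<Sum>i<d. \<Sum>j<d. \<omega> $$ (i, j) * B $$ (j, i))"
  unfolding mtrace_def using assms by (intro sum.cong) (auto simp: scalar_prod_def atLeast0LessThan)

definition bell_values :: "nat \<Rightarrow> nat \<Rightarrow> (nat \<Rightarrow> nat set) \<Rightarrow> (nat \<Rightarrow> real) \<Rightarrow> nat \<Rightarrow> complex mat \<Rightarrow> real set" where
  "bell_values N M E x d \<omega> = {Re (mtrace (\<omega> * bell_operator M E x d A)) | A. admissible N M E d A}"

lemma C_val_eq_Sup_bell_values: "C_val N M E x d \<omega> = Sup (bell_values N M E x d \<omega>)"
  unfolding C_val_def bell_values_def ..

lemma bell_values_nonempty: "bell_values N M E x d \<omega> \<noteq> {}"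
proof -
  have "admissible N M E d (\<lambda>_. 1\<^sub>m d)"
    unfolding admissible_def hermitian_mat_def dagger_one by simp
  then show ?thesis unfolding bell_values_def by blast
qed

lemma bell_values_le:
  assumes contexts: "\<forall>n<M. E n \<subseteq> {..<N}" and \<omega>: "\<omega> \<in> carrier_mat d d"
    and entries: "\<forall>i<d. \<forall>j<d. cmod (\<omega> $$ (i, j)) \<le> c"
    and s: "s \<in> bell_values N M E x d \<omega>"
  shows "s \<le> real d * real d * c * (\<Sum>n<M. \<bar>x n\<bar>)"
proof -
  obtain A where adm: "admissible N M E d A" and s: "s = Re (mtrace (\<omega> * bell_operator M E x d A))"
    using s unfolding bell_values_def by blast
  let ?B = "bell_operator M E x d A"
  have "s \<le> cmod (mtrace (\<omega> * ?B))" unfolding s by (rule complex_Re_le_cmod)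
  also have "\<dots> \<le> (\<Sum>i<d. \<Sum>j<d. cmod (\<omega> $$ (i, j) * ?B $$ (j, i)))"
    unfolding mtrace_mult[OF \<omega> bell_operator_carrier[OF adm contexts]]
    by (rule order_trans[OF norm_sum sum_mono[OF norm_sum]])
  also have "\<dots> \<le> (\<Sum>i<d. \<Sum>j<d. c * (\<Sum>n<M. \<bar>x n\<bar>))"
    using entries bell_operator_entry_norm_le[OF adm contexts]
    by (intro sum_mono) (simp add: norm_mult mult_mono')
  finally show ?thesis by simp
qed

lemma pair_index_less:
  fixes i b d0 dB :: nat
  assumes "i < d0" "b < dB"
  shows "i * dB + b < d0 * dB"
proof -
  have "(i + 1) * dB \<le> d0 * dB" using assms(1) by (intro mult_le_mono1) simp
  then show ?thesis using assms(2) by simp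
qed

lemma pure_state_entry_norm_le_1:
  assumes "pure_state D \<psi>" "k < D"
  shows "cmod (\<psi> $ k) \<le> 1"
proof -
  have "(cmod (\<psi> $ k))\<^sup>2 \<le> (\<Sum>i<D. (cmod (\<psi> $ i))\<^sup>2)"
    using assms(2) by (intro member_le_sum) auto
  then show ?thesis using assms(1) unfolding pure_state_def by (simp add: power_le_one_iff abs_le_square_iff)
qed

lemma ptrace_B_carrier: "ptrace_B d0 dB X \<in> carrier_mat d0 d0"
  unfolding ptrace_B_def by simp

lemma ptrace_B_proj_entry_norm_le:
  assumes \<psi>: "pure_state (d0 * dB) \<psi>" and ij: "i < d0" "j < d0"
  shows "cmod (ptrace_B d0 dB (proj_vec \<psi>) $$ (i, j)) \<le> real dB"
proof -
  have "ptrace_B d0 dB (proj_vec \<psi>) $$ (i, j) = (\<Sum>b<dB. \<psi> $ (i * dB + b) * cnj (\<psi> $ (j * dB + b)))"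
    unfolding ptrace_B_def using \<psi> ij pair_index_less
    by (intro trans[OF index_mat(1)] sum.cong refl) (auto simp: proj_vec_def pure_state_def)
  then have "cmod (ptrace_B d0 dB (proj_vec \<psi>) $$ (i, j))
      \<le> (\<Sum>b<dB. cmod (\<psi> $ (i * dB + b) * cnj (\<psi> $ (j * dB + b))))"
    by (simp add: norm_sum)
  also have "\<dots> \<le> (\<Sum>b<dB. 1)"
    using pure_state_entry_norm_le_1[OF \<psi>] pair_index_less ij
    by (intro sum_mono) (simp add: norm_mult mult_le_one)
  finally show ?thesis by simp
qed

lemma bell_values_ptrace_pure_le:
  assumes "\<forall>n<M. E n \<subseteq> {..<N}" "pure_state (d0 * dB) \<psi>"
    and "s \<in> bell_values N M E x d0 (ptrace_B d0 dB (proj_vec \<psi>))"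
  shows "s \<le> real d0 * real d0 * real dB * (\<Sum>n<M. \<bar>x n\<bar>)"
  using assms ptrace_B_proj_entry_norm_le[OF assms(2)]
  by (intro bell_values_le[OF assms(1) ptrace_B_carrier]) auto

lemma C_val_ptrace_pure_le:
  assumes "\<forall>n<M. E n \<subseteq> {..<N}" "pure_state (d0 * dB) \<psi>"
  shows "C_val N M E x d0 (ptrace_B d0 dB (proj_vec \<psi>)) \<le> real d0 * real d0 * real dB * (\<Sum>n<M. \<bar>x n\<bar>)"
  unfolding C_val_eq_Sup_bell_values
  using bell_values_ptrace_pure_le[OF assms] by (intro cSup_least bell_values_nonempty) auto

section \<open>Convexity of \<open>C\<^sub>d\<close> along ensembles\<close>

lemma ptrace_B_ensemble_index:
  assumes ens: "pure_ensemble (d0 * dB) \<rho> K P \<Psi>" and ij: "i < d0" "j < d0"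
  shows "ptrace_B d0 dB \<rho> $$ (i, j)
    = (\<Sum>m<K. complex_of_real (P m) * ptrace_B d0 dB (proj_vec (\<Psi> m)) $$ (i, j))"
proof -
  have dim: "dim_vec (\<Psi> m) = d0 * dB" if "m < K" for m
    using ens that unfolding pure_ensemble_def pure_state_def by auto
  have terms: "\<forall>m<K. complex_of_real (P m) \<cdot>\<^sub>m proj_vec (\<Psi> m) \<in> carrier_mat (d0 * dB) (d0 * dB)"
    using dim unfolding proj_vec_def by auto
  have \<rho>: "foldr (\<lambda>m B. complex_of_real (P m) \<cdot>\<^sub>m proj_vec (\<Psi> m) + B) [0..<K] (0\<^sub>m (d0 * dB) (d0 * dB))
      = \<rho>"
    using ens unfolding pure_ensemble_def by blast
  have "ptrace_B d0 dB \<rho> $$ (i, j) = (\<Sum>b<dB. \<rho> $$ (i * dB + b, j * dB + b))"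
    unfolding ptrace_B_def using ij by simp
  also have "\<dots> = (\<Sum>b<dB. \<Sum>m<K. complex_of_real (P m) * proj_vec (\<Psi> m) $$ (i * dB + b, j * dB + b))"
  proof (intro sum.cong refl)
    fix b assume "b \<in> {..<dB}"
    then have idx: "i * dB + b < d0 * dB" "j * dB + b < d0 * dB" using ij pair_index_less by auto
    show "\<rho> $$ (i * dB + b, j * dB + b)
        = (\<Sum>m<K. complex_of_real (P m) * proj_vec (\<Psi> m) $$ (i * dB + b, j * dB + b))"
      unfolding \<rho>[symmetric] foldr_add_upt_index[OF terms idx]
      using idx dim by (intro sum.cong refl) (simp add: proj_vec_def)
  qed
  also have "\<dots> = (\<Sum>m<K. complex_of_real (P m) * ptrace_B d0 dB (proj_vec (\<Psi> m)) $$ (i, j))"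
    unfolding ptrace_B_def using ij by (simp add: sum_distrib_left sum.swap[of _ "{..<dB}"])
  finally show ?thesis .
qed

lemma Re_trace_ptrace_ensemble:
  assumes ens: "pure_ensemble (d0 * dB) \<rho> K P \<Psi>" and B: "B \<in> carrier_mat d0 d0"
  shows "Re (mtrace (ptrace_B d0 dB \<rho> * B))
    = (\<Sum>m<K. P m * Re (mtrace (ptrace_B d0 dB (proj_vec (\<Psi> m)) * B)))"
proof -
  have "mtrace (ptrace_B d0 dB \<rho> * B) = (\<Sum>i<d0. \<Sum>j<d0. \<Sum>m<K.
      complex_of_real (P m) * (ptrace_B d0 dB (proj_vec (\<Psi> m)) $$ (i, j) * B $$ (j, i)))"
    unfolding mtrace_mult[OF ptrace_B_carrier B]
    by (intro sum.cong refl) (simp add: ptrace_B_ensemble_index[OF ens] sum_distrib_right mult.assoc)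
  also have "\<dots> = (\<Sum>m<K. complex_of_real (P m) * mtrace (ptrace_B d0 dB (proj_vec (\<Psi> m)) * B))"
    unfolding mtrace_mult[OF ptrace_B_carrier B]
    by (simp add: sum_distrib_left sum.swap[of _ "{..<K}"])
  finally show ?thesis by (simp add: Re_sum)
qed

lemma C_val_ptrace_le_ensemble_average:
  assumes contexts: "\<forall>n<M. E n \<subseteq> {..<N}" and ens: "pure_ensemble (d0 * dB) \<rho> K P \<Psi>"
  shows "C_val N M E x d0 (ptrace_B d0 dB \<rho>)
    \<le> (\<Sum>m<K. P m * C_val N M E x d0 (ptrace_B d0 dB (proj_vec (\<Psi> m))))"
  unfolding C_val_eq_Sup_bell_values[of _ _ _ _ _ "ptrace_B d0 dB \<rho>"]
proof (rule cSup_least[OF bell_values_nonempty])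
  fix s assume "s \<in> bell_values N M E x d0 (ptrace_B d0 dB \<rho>)"
  then obtain A where adm: "admissible N M E d0 A"
    and s: "s = Re (mtrace (ptrace_B d0 dB \<rho> * bell_operator M E x d0 A))"
    unfolding bell_values_def by blast
  have pure: "\<forall>m<K. 0 \<le> P m \<and> pure_state (d0 * dB) (\<Psi> m)"
    using ens unfolding pure_ensemble_def by blast
  have "s = (\<Sum>m<K. P m * Re (mtrace (ptrace_B d0 dB (proj_vec (\<Psi> m)) * bell_operator M E x d0 A)))"
    unfolding s by (rule Re_trace_ptrace_ensemble[OF ens bell_operator_carrier[OF adm contexts]])
  also have "\<dots> \<le> (\<Sum>m<K. P m * C_val N M E x d0 (ptrace_B d0 dB (proj_vec (\<Psi> m))))"
  proof (intro sum_mono mult_left_mono)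
    fix m assume "m \<in> {..<K}"
    then have "bdd_above (bell_values N M E x d0 (ptrace_B d0 dB (proj_vec (\<Psi> m))))"
      using bell_values_ptrace_pure_le[OF contexts] pure
      by (intro bdd_aboveI[of _ "real d0 * real d0 * real dB * (\<Sum>n<M. \<bar>x n\<bar>)"]) auto
    then show "Re (mtrace (ptrace_B d0 dB (proj_vec (\<Psi> m)) * bell_operator M E x d0 A))
        \<le> C_val N M E x d0 (ptrace_B d0 dB (proj_vec (\<Psi> m)))"
      unfolding C_val_eq_Sup_bell_values using adm by (intro cSup_upper) (auto simp: bell_values_def)
    show "0 \<le> P m" using pure \<open>m \<in> {..<K}\<close> by blast
  qed
  finally show "s \<le> (\<Sum>m<K. P m * C_val N M E x d0 (ptrace_B d0 dB (proj_vec (\<Psi> m))))" .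
qed

lemma convex_combination_lower_bound:
  fixes P f :: "nat \<Rightarrow> real"
  assumes "\<forall>m<K. 0 \<le> P m" "(\<Sum>m<K. P m) = 1" "\<forall>m<K. c \<le> f m"
  shows "c \<le> (\<Sum>m<K. P m * f m)"
proof -
  have "c = (\<Sum>m<K. P m * c)" using assms(2) by (simp flip: sum_distrib_right)
  also have "\<dots> \<le> (\<Sum>m<K. P m * f m)" using assms(1,3) by (intro sum_mono mult_left_mono) auto
  finally show ?thesis .
qed

lemma ent_E_le_ensemble:
  assumes contexts: "\<forall>n<M. E n \<subseteq> {..<N}" and ens: "pure_ensemble (d0 * dB) \<rho> K P \<Psi>"
  shows "ent_E N M E x d0 dB \<rho>
    \<le> (\<Sum>m<K. P m * (C_max N M E x d0 - C_val N M E x d0 (ptrace_B d0 dB (proj_vec (\<Psi> m)))))"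
  unfolding ent_E_def
proof (rule cInf_lower)
  show "bdd_below {\<Sum>m<K. P m * (C_max N M E x d0 - C_val N M E x d0 (ptrace_B d0 dB (proj_vec (\<Psi> m))))
      | K P \<Psi>. pure_ensemble (d0 * dB) \<rho> K P \<Psi>}"
  proof (rule bdd_belowI, clarify)
    fix K' P' \<Psi>' assume "pure_ensemble (d0 * dB) \<rho> K' P' \<Psi>'"
    then show "C_max N M E x d0 - real d0 * real d0 * real dB * (\<Sum>n<M. \<bar>x n\<bar>)
        \<le> (\<Sum>m<K'. P' m * (C_max N M E x d0 - C_val N M E x d0 (ptrace_B d0 dB (proj_vec (\<Psi>' m)))))"
      unfolding pure_ensemble_def
      by (intro convex_combination_lower_bound) (auto intro: C_val_ptrace_pure_le[OF contexts])
  qed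
qed (use ens in blast)

theorem mainTheorem5:
  fixes N M :: nat and E :: "nat \<Rightarrow> nat set" and x :: "nat \<Rightarrow> real"
    and d0 dB :: nat and \<rho> :: "complex mat"
  assumes "nc_inequality N M E x"
    and "density_mat (d0 * dB) \<rho>"
  shows "ent_E N M E x d0 dB \<rho> + C_val N M E x d0 (ptrace_B d0 dB \<rho>) \<le> C_max N M E x d0"
proof -
  have contexts: "\<forall>n<M. E n \<subseteq> {..<N}" using assms(1) unfolding nc_inequality_def by blast
  obtain K P \<Psi> where ens: "pure_ensemble (d0 * dB) \<rho> K P \<Psi>"
    using density_mat_pure_ensemble[OF assms(2)] by blast
  let ?C = "\<lambda>m. C_val N M E x d0 (ptrace_B d0 dB (proj_vec (\<Psi> m)))"
  have "ent_E N M E x d0 dB \<rho> \<le> (\<Sum>m<K. P m * (C_max N M E x d0 - ?C m))"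
    by (rule ent_E_le_ensemble[OF contexts ens])
  also have "\<dots> = C_max N M E x d0 - (\<Sum>m<K. P m * ?C m)"
    using ens unfolding pure_ensemble_def
    by (simp add: right_diff_distrib sum_subtractf flip: sum_distrib_right)
  also have "\<dots> \<le> C_max N M E x d0 - C_val N M E x d0 (ptrace_B d0 dB \<rho>)"
    using C_val_ptrace_le_ensemble_average[OF contexts ens] by simp
  finally show ?thesis by simp
qed

end
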